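(* Let $k$ be finite, $L\in\mathbb{R}^{k\times k}$ any nonnegative task loss matrix, $\Phi:\mathbb{R}^k\times\{1,\dots,k\}\to\mathbb{R}$ a surrogate loss that is continuous and bounded from below, and $\mathcal{F}\subseteq\mathbb{R}^k$ a subspace of scores. Then $$H_{\Phi,L,\mathcal{F}}(\varepsilon)=\min_{i,j\in\mathrm{pred}(\mathcal{F}),\,i\ne j}H_{ij}(\varepsilon),$$ where $\mathrm{pred}(\mathcal{F})=\{\mathrm{pred}(f):f\in\mathcal{F}\}$ and $$H_{ij}(\varepsilon)=\inf_{f,q}\ \delta\phi(f,q)\ \text{ s.t. } \ell_i(q)\le\ell_j(q)-\varepsilon;\ \ell_i(q)\le\ell_c(q)\ \forall c\in\mathrm{pred}(\mathcal{F});\ f_j\ge f_c\ \forall c\in\mathrm{pred}(\mathcal{F});\ f\in\mathcal{F};\ q\in\Delta_k,$$ with $\ell_c(q)=(Lq)_c$.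
   Context: $\mathrm{pred}(f)$ is the smallest index maximizing $f_c$. For $q\in\Delta_k$: $\ell(f,q)=\sum_cq_cL(\mathrm{pred}(f),c)$, $\phi(f,q)=\sum_cq_c\Phi(f,c)$, $\delta\ell(f,q)=\ell(f,q)-\inf_{\hat f\in\mathcal{F}}\ell(\hat f,q)$, $\delta\phi(f,q)=\phi(f,q)-\inf_{\hat f\in\mathcal{F}}\phi(\hat f,q)$. Calibration function: $H_{\Phi,L,\mathcal{F}}(\varepsilon)=\inf\{\delta\phi(f,q):f\in\mathcal{F},q\in\Delta_k,\delta\ell(f,q)\ge\varepsilon\}$ ($+\infty$ if empty). Infima over empty sets are $+\infty$. *)

theory Defs
  imports "HOL-Analysis.Analysis" "HOL-Library.Extended_Real"
begin

text \<open>Classes are the elements of a finite, well-ordered type 'n (k = CARD('n)).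
Scores are vectors f :: (real,'n) vec; the task loss is a matrix L :: ((real,'n) vec,'n) vec with
entry L(i,c) = L$i$c; the surrogate is Phi :: (real,'n) vec => 'n => real.\<close>

definition pred :: "(real,'n::{finite,wellorder}) vec \<Rightarrow> 'n" where
  "pred f = (LEAST c. \<forall>c'. f$c' \<le> f$c)"

definition prob_simplex :: "(real,'n::finite) vec set" where
  "prob_simplex = {q. (\<forall>c. 0 \<le> q$c) \<and> (\<Sum>c\<in>UNIV. q$c) = 1}"

definition task_loss :: "((real,'n::{finite,wellorder}) vec,'n) vec \<Rightarrow> (real,'n) vec \<Rightarrow> (real,'n) vec \<Rightarrow> real" where
  "task_loss L f q = (\<Sum>c\<in>UNIV. q$c * L$(pred f)$c)"

definition surr_loss :: "(real^('n::finite) \<Rightarrow> 'n \<Rightarrow> real) \<Rightarrow> (real,'n) vec \<Rightarrow> (real,'n) vec \<Rightarrow> real" where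
  "surr_loss Phi f q = (\<Sum>c\<in>UNIV. q$c * Phi f c)"

definition excess_task :: "((real,'n::{finite,wellorder}) vec,'n) vec \<Rightarrow> ((real,'n) vec) set \<Rightarrow> (real,'n) vec \<Rightarrow> (real,'n) vec \<Rightarrow> real" where
  "excess_task L F f q = task_loss L f q - (INF g\<in>F. task_loss L g q)"

definition excess_surr :: "((real,'n) vec \<Rightarrow> 'n \<Rightarrow> real) \<Rightarrow> ((real,'n) vec) set \<Rightarrow> real^('n::finite) \<Rightarrow> (real,'n) vec \<Rightarrow> real" where
  "excess_surr Phi F f q = surr_loss Phi f q - (INF g\<in>F. surr_loss Phi g q)"

text \<open>Calibration function (infimum over the empty set is +infinity).\<close>
definition calib :: "((real,'n::{finite,wellorder}) vec \<Rightarrow> 'n \<Rightarrow> real) \<Rightarrow> ((real,'n) vec,'n) vec \<Rightarrow> ((real,'n) vec) set \<Rightarrow> real \<Rightarrow> ereal" where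
  "calib Phi L F eps = Inf {ereal (excess_surr Phi F f q) | f q.
      f \<in> F \<and> q \<in> prob_simplex \<and> excess_task L F f q \<ge> eps}"

definition ell_c :: "real^('n::finite)^'n \<Rightarrow> (real,'n) vec \<Rightarrow> 'n \<Rightarrow> real" where
  "ell_c L q c = (L *v q)$c"

definition H_ij :: "((real,'n::{finite,wellorder}) vec \<Rightarrow> 'n \<Rightarrow> real) \<Rightarrow> ((real,'n) vec,'n) vec \<Rightarrow> ((real,'n) vec) set \<Rightarrow> 'n \<Rightarrow> 'n \<Rightarrow> real \<Rightarrow> ereal" where
  "H_ij Phi L F i j eps = Inf {ereal (excess_surr Phi F f q) | f q.
      f \<in> F \<and> q \<in> prob_simplex \<and>
      ell_c L q i \<le> ell_c L q j - eps \<and>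
      (\<forall>c\<in>pred ` F. ell_c L q i \<le> ell_c L q c) \<and>
      (\<forall>c\<in>pred ` F. f$c \<le> f$j)}"

end

theory Submission
  imports Defs
begin

text \<open>Since the task loss only depends on pred f, the excess task loss of f equals
ell_{pred f}(q) - min_{c \<in> pred F} ell_c(q). A feasible point of the calibration problem
therefore satisfies the constraints of H_ij with j = pred f and i an argmin of ell over pred F.
Conversely, given a feasible (f, q) of H_ij, choose g \<in> F with pred g = j: for every t > 0 the
score f + t g lies in F and predicts j, because f is maximal at j on all coordinates and g breaks
the ties in favour of j. So f + t g is feasible for the calibration problem, and letting t \<rightarrow> 0
the continuity of Phi gives calib \<le> \<delta>\<phi>(f, q).\<close>

lemma pred_maximal:
  fixes f :: "(real,'n::{finite,wellorder}) vec"
  shows "f $ c \<le> f $ pred f"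
proof -
  have "Max (range (($) f)) \<in> range (($) f)"
    by (intro Max_in) auto
  then obtain m where "f $ m = Max (range (($) f))"
    by (metis rangeE)
  then have "\<forall>c'. f $ c' \<le> f $ m"
    by simp
  then have "\<forall>c'. f $ c' \<le> f $ pred f"
    unfolding pred_def by (rule LeastI)
  then show ?thesis by blast
qed

lemma pred_least:
  fixes f :: "(real,'n::{finite,wellorder}) vec"
  assumes "\<forall>c'. f $ c' \<le> f $ c"
  shows "pred f \<le> c"
  unfolding pred_def using assms by (rule Least_le)

lemma pred_less_before:
  fixes f :: "(real,'n::{finite,wellorder}) vec"
  assumes "c < pred f"
  shows "f $ c < f $ pred f"
proof (rule ccontr)
  assume "\<not> f $ c < f $ pred f"
  then have "\<forall>c'. f $ c' \<le> f $ c"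
    using pred_maximal[of f] by (meson not_less order_trans)
  then show False
    using pred_least assms by (metis not_le)
qed

lemma pred_eqI:
  fixes f :: "(real,'n::{finite,wellorder}) vec"
  assumes "\<forall>c. f $ c \<le> f $ j" and "\<forall>c<j. f $ c < f $ j"
  shows "pred f = j"
  unfolding pred_def
proof (rule Least_equality)
  show "\<forall>c'. f $ c' \<le> f $ j" using assms(1) .
  show "j \<le> y" if "\<forall>c'. f $ c' \<le> f $ y" for y
    using that assms(2) by (meson not_le not_less)
qed

lemma pred_add_scaleR:
  fixes f g :: "(real,'n::{finite,wellorder}) vec"
  assumes "\<forall>c. f $ c \<le> f $ pred g" and "0 < t"
  shows "pred (f + t *\<^sub>R g) = pred g"
proof (rule pred_eqI)
  show "\<forall>c. (f + t *\<^sub>R g) $ c \<le> (f + t *\<^sub>R g) $ pred g"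
    using assms pred_maximal[of g] by (simp add: add_mono mult_left_mono)
  show "\<forall>c<pred g. (f + t *\<^sub>R g) $ c < (f + t *\<^sub>R g) $ pred g"
    using assms pred_less_before[of _ g] by (simp add: add_le_less_mono)
qed

lemma task_loss_eq_ell_c: "task_loss L f q = ell_c L q (pred f)"
  unfolding task_loss_def ell_c_def matrix_vector_mult_def by (simp add: mult.commute)

lemma INF_task_loss_eq_Min:
  assumes "F \<noteq> {}"
  shows "(INF g\<in>F. task_loss L g q) = Min (ell_c L q ` pred ` F)"
proof -
  have "(\<lambda>g. task_loss L g q) ` F = ell_c L q ` pred ` F"
    by (simp add: task_loss_eq_ell_c image_image)
  then show ?thesis
    using assms by (simp add: cInf_eq_Min)
qed

lemma excess_task_eq:
  assumes "F \<noteq> {}"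
  shows "excess_task L F f q = ell_c L q (pred f) - Min (ell_c L q ` pred ` F)"
  unfolding excess_task_def INF_task_loss_eq_Min[OF assms] by (simp add: task_loss_eq_ell_c)

lemma excess_task_witness:
  assumes "F \<noteq> {}" and "eps \<le> excess_task L F f q" and "0 < eps"
  obtains i where "i \<in> pred ` F" and "i \<noteq> pred f"
    and "ell_c L q i \<le> ell_c L q (pred f) - eps"
    and "\<forall>c\<in>pred ` F. ell_c L q i \<le> ell_c L q c"
proof -
  have "Min (ell_c L q ` pred ` F) \<in> ell_c L q ` pred ` F"
    using assms(1) by (intro Min_in) auto
  then obtain i where i: "i \<in> pred ` F" and iM: "ell_c L q i = Min (ell_c L q ` pred ` F)"
    by (metis imageE)
  have "ell_c L q i \<le> ell_c L q (pred f) - eps"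
    using assms(2) iM excess_task_eq[OF assms(1)] by simp
  moreover have "\<forall>c\<in>pred ` F. ell_c L q i \<le> ell_c L q c"
    using iM by simp
  ultimately show ?thesis
    using that i assms(3) by force
qed

lemma continuous_on_excess_surr:
  assumes "\<And>c. continuous_on UNIV (\<lambda>f. Phi f c)"
  shows "continuous_on UNIV (\<lambda>f. excess_surr Phi F f q)"
  unfolding excess_surr_def surr_loss_def by (intro continuous_intros assms)

lemma calib_le_excess_surr:
  fixes L :: "((real,'n::{finite,wellorder}) vec,'n) vec"
  assumes F: "subspace F"
    and Phi_cont: "\<And>c. continuous_on UNIV (\<lambda>f. Phi f c)"
    and f: "f \<in> F" and q: "q \<in> prob_simplex"
    and i: "i \<in> pred ` F" and j: "j \<in> pred ` F"
    and gap: "ell_c L q i \<le> ell_c L q j - eps"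
    and f_max: "\<forall>c\<in>pred ` F. f $ c \<le> f $ j"
  shows "calib Phi L F eps \<le> ereal (excess_surr Phi F f q)"
proof -
  obtain g where g: "g \<in> F" and gj: "pred g = j"
    using j by blast
  define h where "h t = f + t *\<^sub>R g" for t :: real
  have f_max_all: "\<forall>c. f $ c \<le> f $ pred g"
    using gj f_max pred_maximal[of f] f by (meson image_eqI order_trans)
  have F_ne: "F \<noteq> {}"
    using f by blast
  have bound: "calib Phi L F eps \<le> ereal (excess_surr Phi F (h t) q)" if "0 < t" for t
  proof -
    have "pred (h t) = j"
      unfolding h_def using pred_add_scaleR[OF f_max_all that] gj by simp
    moreover have "Min (ell_c L q ` pred ` F) \<le> ell_c L q i"
      using i by simp
    ultimately have "eps \<le> excess_task L F (h t) q"
      using gap excess_task_eq[OF F_ne] by simp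
    moreover have "h t \<in> F"
      unfolding h_def using F f g by (simp add: subspace_add subspace_scale)
    ultimately show ?thesis
      unfolding calib_def using q by (intro Inf_lower) blast
  qed
  have "\<forall>\<^sub>F t in at_right 0. calib Phi L F eps \<le> ereal (excess_surr Phi F (h t) q)"
    using eventually_at_right_less[of "0::real"] by (rule eventually_mono) (rule bound)
  moreover have "(h \<longlongrightarrow> f + 0 *\<^sub>R g) (at_right 0)"
    unfolding h_def by (intro tendsto_intros)
  then have "((\<lambda>t. excess_surr Phi F (h t) q) \<longlongrightarrow> excess_surr Phi F f q) (at_right 0)"
    using continuous_on_tendsto_compose[OF continuous_on_excess_surr[OF Phi_cont]] by simp
  ultimately show ?thesis
    by (intro tendsto_le[OF trivial_limit_at_right_real tendsto_ereal tendsto_const])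
qed

theorem lemma10:
  fixes L :: "((real,'n::{finite,wellorder}) vec,'n) vec"
    and Phi :: "(real,'n) vec \<Rightarrow> 'n \<Rightarrow> real"
    and F :: "((real,'n) vec) set"
    and eps :: real
  assumes L_nonneg: "\<And>i c. 0 \<le> L$i$c"
    and Phi_cont: "\<And>c. continuous_on UNIV (\<lambda>f. Phi f c)"
    and Phi_bdd: "\<exists>B. \<forall>f c. B \<le> Phi f c"
    and F_subspace: "subspace F"
    and eps_pos: "0 < eps"
  shows "calib Phi L F eps =
           (INF ij \<in> {(i, j). i \<in> pred ` F \<and> j \<in> pred ` F \<and> i \<noteq> j}.
              H_ij Phi L F (fst ij) (snd ij) eps)"
proof (rule antisym)
  show "calib Phi L F eps \<le> (INF ij \<in> {(i, j). i \<in> pred ` F \<and> j \<in> pred ` F \<and> i \<noteq> j}.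
          H_ij Phi L F (fst ij) (snd ij) eps)"
  proof (rule INF_greatest)
    fix ij assume "ij \<in> {(i, j). i \<in> pred ` F \<and> j \<in> pred ` F \<and> i \<noteq> j}"
    then obtain i j where ij: "ij = (i, j)" "i \<in> pred ` F" "j \<in> pred ` F"
      by blast
    show "calib Phi L F eps \<le> H_ij Phi L F (fst ij) (snd ij) eps"
      unfolding H_ij_def ij(1) fst_conv snd_conv
      using calib_le_excess_surr[OF F_subspace Phi_cont _ _ ij(2,3)]
      by (intro Inf_greatest) (elim CollectE exE conjE, simp)
  qed
next
  have F_ne: "F \<noteq> {}"
    using subspace_0[OF F_subspace] by blast
  show "(INF ij \<in> {(i, j). i \<in> pred ` F \<and> j \<in> pred ` F \<and> i \<noteq> j}.
          H_ij Phi L F (fst ij) (snd ij) eps) \<le> calib Phi L F eps"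
    unfolding calib_def
  proof (rule Inf_greatest)
    fix x assume "x \<in> {ereal (excess_surr Phi F f q) | f q.
      f \<in> F \<and> q \<in> prob_simplex \<and> excess_task L F f q \<ge> eps}"
    then obtain f q where x: "x = ereal (excess_surr Phi F f q)" and f: "f \<in> F"
      and q: "q \<in> prob_simplex" and ex: "eps \<le> excess_task L F f q"
      by blast
    obtain i where i: "i \<in> pred ` F" "i \<noteq> pred f"
      and "ell_c L q i \<le> ell_c L q (pred f) - eps"
      and "\<forall>c\<in>pred ` F. ell_c L q i \<le> ell_c L q c"
      using excess_task_witness[OF F_ne ex eps_pos] .
    moreover have "\<forall>c\<in>pred ` F. f $ c \<le> f $ pred f"
      using pred_maximal by blast
    ultimately have "H_ij Phi L F i (pred f) eps \<le> x"
      unfolding H_ij_def x using f q by (intro Inf_lower CollectI exI conjI) auto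
    then show "(INF ij \<in> {(i, j). i \<in> pred ` F \<and> j \<in> pred ` F \<and> i \<noteq> j}.
          H_ij Phi L F (fst ij) (snd ij) eps) \<le> x"
      using i f by (intro INF_lower2[of "(i, pred f)"]) auto
  qed
qed

end
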